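(* Let $m\geq 2$ be an integer, $(t_j)_{j=0}^{\infty}$ the $TM_m$ sequence and $\mathbf{t}=t_0t_1t_2\ldots$. Then for every positive integer $n$, $p_{\mathbf{t}}(n)\leq m^3 n$.
   Context: For an integer $m\geq 2$, the $TM_m$ sequence $(t_n)_{n=0}^{\infty}$ is defined by: if $n=\sum_{j=0}^{k}c_j m^j$ is the base-$m$ expansion of $n\geq 0$ (digits $c_j\in\{0,\ldots,m-1\}$), then $t_n:=\sum_{j=0}^{k}c_j \bmod m$. For an infinite word $\mathbf{w}$ over a finite alphabet, the complexity function $p_{\mathbf{w}}(n)$ is the number of distinct (contiguous) subwords of $\mathbf{w}$ of length $n$. *)

theory Defs
  imports Main
begin

fun digit_sum :: "nat \<Rightarrow> nat \<Rightarrow> nat" where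
  "digit_sum m n = (if m < 2 \<or> n = 0 then 0 else n mod m + digit_sum m (n div m))"

definition TM :: "nat \<Rightarrow> nat \<Rightarrow> nat" where
  "TM m n = digit_sum m n mod m"

definition factor :: "(nat \<Rightarrow> 'a) \<Rightarrow> nat \<Rightarrow> nat \<Rightarrow> 'a list" where
  "factor w i n = map w [i..<i+n]"

definition complexity :: "(nat \<Rightarrow> 'a) \<Rightarrow> nat \<Rightarrow> nat" where
  "complexity w n = card {factor w i n | i. True}"

end

theory Submission
  imports Defs
begin

text \<open>Cut the word into blocks of length \<open>L = m\<^sup>k\<close> with \<open>n \<le> L \<le> m n\<close>. Since adding a multiple of
  \<open>m\<^sup>k\<close> to a number below \<open>m\<^sup>k\<close> just concatenates digit strings, the letter at position \<open>qL + s\<close> is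
  the letter \<open>t\<^sub>s\<close> shifted by \<open>t\<^sub>q\<close> modulo \<open>m\<close>. A factor of length \<open>n\<close> meets at most two consecutive
  blocks \<open>q, q + 1\<close>, so it is determined by its offset in the block (\<open>L\<close> choices) and the two
  shifts \<open>t\<^sub>q, t\<^sub>q\<^sub>+\<^sub>1\<close> (\<open>m\<^sup>2\<close> choices), giving at most \<open>m\<^sup>2 L \<le> m\<^sup>3 n\<close> factors.\<close>

lemma digit_sum_0 [simp]: "digit_sum m 0 = 0"
  by simp

lemma digit_sum_eq: "m \<ge> 2 \<Longrightarrow> digit_sum m n = n mod m + digit_sum m (n div m)"
  by (cases "n = 0") simp_all

declare digit_sum.simps [simp del]

lemma digit_sum_mult_power_add:
  assumes "m \<ge> 2" and "s < m ^ k"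
  shows "digit_sum m (q * m ^ k + s) = digit_sum m q + digit_sum m s"
  using assms(2)
proof (induction k arbitrary: q s)
  case 0
  then show ?case by simp
next
  case (Suc k)
  have "s div m < m ^ k"
    using Suc.prems assms(1) by (simp add: div_less_iff_less_mult mult.commute)
  moreover have "(q * m ^ Suc k + s) mod m = s mod m"
    by (simp add: mult.left_commute)
  moreover have "(q * m ^ Suc k + s) div m = q * m ^ k + s div m"
    using assms(1) by (simp add: mult.left_commute)
  ultimately show ?case
    using Suc.IH digit_sum_eq[OF assms(1), of s] digit_sum_eq[OF assms(1), of "q * m ^ Suc k + s"]
    by simp
qed

lemma TM_less: "m \<ge> 2 \<Longrightarrow> TM m n < m"
  unfolding TM_def by simp

lemma TM_mult_power_add:
  assumes "m \<ge> 2" and "s < m ^ k"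
  shows "TM m (q * m ^ k + s) = (TM m q + TM m s) mod m"
  unfolding TM_def digit_sum_mult_power_add[OF assms] by (rule mod_add_eq[symmetric])

lemma TM_two_blocks:
  assumes "m \<ge> 2" and "s < 2 * m ^ k"
  shows "TM m (q * m ^ k + s) =
    (if s < m ^ k then (TM m q + TM m s) mod m else (TM m (q + 1) + TM m (s - m ^ k)) mod m)"
proof (cases "s < m ^ k")
  case True
  then show ?thesis using TM_mult_power_add[OF assms(1)] by simp
next
  case False
  then have "q * m ^ k + s = (q + 1) * m ^ k + (s - m ^ k)" and "s - m ^ k < m ^ k"
    using assms(2) by (simp_all add: algebra_simps)
  then show ?thesis using False TM_mult_power_add[OF assms(1)] by metis
qed

lemma factor_conv_map_upt: "factor w i n = map (\<lambda>j. w (i + j)) [0..<n]"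
  unfolding factor_def by (rule nth_equalityI) auto

lemma complexity_le_card:
  assumes "finite A" and "\<And>i. \<exists>x\<in>A. factor w i n = F x"
  shows "complexity w n \<le> card A"
proof -
  have "{factor w i n | i. True} \<subseteq> F ` A"
    using assms(2) by blast
  then have "complexity w n \<le> card (F ` A)"
    unfolding complexity_def using assms(1) by (intro card_mono) simp_all
  also have "\<dots> \<le> card A"
    using assms(1) by (rule card_image_le)
  finally show ?thesis .
qed

lemma complexity_TM_le_block_length:
  assumes "m \<ge> 2" and "n \<le> m ^ k"
  shows "complexity (TM m) n \<le> m ^ k * m * m"
proof -
  define L where "L = m ^ k"
  have "L > 0"
    using assms(1) by (simp add: L_def)
  define F where "F = (\<lambda>(r, a, b). map (\<lambda>j.
      if r + j < L then (a + TM m (r + j)) mod m else (b + TM m (r + j - L)) mod m) [0..<n])"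
  have "factor (TM m) i n = F (i mod L, TM m (i div L), TM m (i div L + 1))" for i
  proof -
    have "TM m (i + j) = (if i mod L + j < L then (TM m (i div L) + TM m (i mod L + j)) mod m
        else (TM m (i div L + 1) + TM m (i mod L + j - L)) mod m)" if "j < n" for j
    proof -
      have "i + j = i div L * m ^ k + (i mod L + j)"
        unfolding L_def[symmetric] by simp
      moreover have "i mod L + j < 2 * m ^ k"
        using that assms(2) mod_less_divisor[OF \<open>L > 0\<close>, of i] unfolding L_def by linarith
      ultimately show ?thesis
        using TM_two_blocks[OF assms(1)] unfolding L_def by presburger
    qed
    then show ?thesis
      unfolding factor_conv_map_upt F_def by simp
  qed
  moreover have "(i mod L, TM m (i div L), TM m (i div L + 1)) \<in> {..<L} \<times> {..<m} \<times> {..<m}" for i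
    using \<open>L > 0\<close> TM_less[OF assms(1)] by simp
  ultimately have "complexity (TM m) n \<le> card ({..<L} \<times> {..<m} \<times> {..<m})"
    by (intro complexity_le_card[where F = F]) blast+
  then show ?thesis
    by (simp add: card_cartesian_product L_def)
qed

lemma power_between:
  fixes m n :: nat
  assumes "m \<ge> 2" and "n \<ge> 1"
  obtains k where "n \<le> m ^ k" and "m ^ k \<le> m * n"
proof -
  have "n \<le> m ^ n"
    using less_exp[of n] power_mono[of 2 m n] assms(1) by simp
  then have "\<exists>k. n \<le> m ^ k" ..
  define k where "k = (LEAST k. n \<le> m ^ k)"
  have "n \<le> m ^ k"
    unfolding k_def using \<open>\<exists>k. n \<le> m ^ k\<close> by (rule LeastI_ex)
  moreover have "m ^ k \<le> m * n"
  proof (cases k)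
    case 0
    then show ?thesis using assms by simp
  next
    case (Suc k')
    then have "\<not> n \<le> m ^ k'"
      using not_less_Least[of k' "\<lambda>k. n \<le> m ^ k"] unfolding k_def by simp
    then show ?thesis using Suc by simp
  qed
  ultimately show ?thesis by (rule that)
qed

theorem lemma4p1:
  fixes m n :: nat
  assumes "m \<ge> 2" and "n \<ge> 1"
  shows "complexity (TM m) n \<le> m ^ 3 * n"
proof -
  obtain k where "n \<le> m ^ k" and "m ^ k \<le> m * n"
    using power_between[OF assms] .
  then have "complexity (TM m) n \<le> m ^ k * m * m"
    using complexity_TM_le_block_length[OF assms(1)] by blast
  also have "\<dots> \<le> m * n * m * m"
    using \<open>m ^ k \<le> m * n\<close> by simp
  also have "\<dots> = m ^ 3 * n"
    by (simp add: power3_eq_cube)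
  finally show ?thesis .
qed

end
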